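(* Let $d\ge2$ and $X=C^{\star}+R^{\star}S(U)$ with $C^{\star}\in\mathbb{R}^d$, $R^{\star}>0$, and $U$ a random vector in $[0,1]^{d-1}$ satisfying (H2). Let $\widetilde X^{(1)}=X^{(1)}$ and $\widetilde X^{(2)}=(X^{(2)},\dots,X^{(d)})^T$. Then for all $z\in\mathbb{C}$, $E[\exp(iz\widetilde X^{(1)})\mid\widetilde X^{(2)}]$ is not $P_{\widetilde X^{(2)}}$-a.s. the null random variable, and for all $z\in\mathbb{C}^{d-1}$, $E[\exp(iz^T\widetilde X^{(2)})\mid\widetilde X^{(1)}]$ is not $P_{\widetilde X^{(1)}}$-a.s. the null random variable, where $P_{\widetilde X^{(p)}}$ is the law of $\widetilde X^{(p)}$.
   Context: For $u\in[0,1]^{d-1}$, $S(u)\in\mathbb{R}^d$ has coordinates $S(u)^{(1)}=\cos(2\pi u^{(1)})$, $S(u)^{(k)}=\sin(2\pi u^{(1)})\prod_{l=2}^{k-1}\sin(\pi u^{(l)})\cos(\pi u^{(k)})$ for $2\le k\le d-1$, and $S(u)^{(d)}=\sin(2\pi u^{(1)})\prod_{l=2}^{d-1}\sin(\pi u^{(l)})$ (for $d=2$, $S(u)=(\cos2\pi u,\sin2\pi u)$). (H2): $U$ has a density $f^{\star}$ with respect to Lebesgue measure on $[0,1]^{d-1}$, and when $d>2$, $f^{\star}$ is positive on $(0,\gamma)^{d-1}$ for some $\gamma>0$. *)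

theory Defs
  imports "HOL-Probability.Probability"
begin

text \<open>Hyperspherical parametrisation S : [0,1]^(d-1) -> R^d.
  Coordinates are 0-indexed: paper's u^(l) is u (l-1), paper's S(u)^(k) is sph d u (k-1).\<close>
definition sph :: "nat \<Rightarrow> (nat \<Rightarrow> real) \<Rightarrow> (nat \<Rightarrow> real)" where
  "sph d u = (\<lambda>k.
     if k = 0 then cos (2 * pi * u 0)
     else if k < d - 1 then
       sin (2 * pi * u 0) * (\<Prod>l\<in>{1..<k}. sin (pi * u l)) * cos (pi * u k)
     else if k = d - 1 then
       sin (2 * pi * u 0) * (\<Prod>l\<in>{1..<d-1}. sin (pi * u l))
     else 0)"

definition cplx_cond_exp :: "'a measure \<Rightarrow> 'a measure \<Rightarrow> ('a \<Rightarrow> complex) \<Rightarrow> ('a \<Rightarrow> complex)" where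
  "cplx_cond_exp M F g = (\<lambda>x. Complex (real_cond_exp M F (\<lambda>y. Re (g y)) x)
                                        (real_cond_exp M F (\<lambda>y. Im (g y)) x))"

end

theory Submission
  imports Defs
begin

(* Write Y = X^(1) - C^(1) = R cos(2 pi U^(1)).  Since X lies on the sphere of radius R around C,
   |Y| is a function of X~^(2).  Up to a constant phase, exp(i z X~^(1)) is exp(i z Y), and multiplying
   it by the X~^(2)-measurable sign of cos(Re z |Y|) yields exp(-Im z Y) |cos(Re z Y)| >= 0.  If the
   conditional expectation vanished, this would have integral 0, so cos(Re z Y) = 0 almost surely,
   i.e. U^(1) would lie in a countable set, which is a null event because U has a density.
   For d = 2 the same argument works with the two coordinates exchanged.  For d > 2 and X~^(2) given
   X~^(1), consider the X~^(1)-measurable event that |sin(2 pi U^(1))| is small: there all of X~^(2) is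
   close to its centre, so exp(i z^T X~^(2)) has, up to a constant phase, positive real part.  A vanishing
   conditional expectation makes this event null, contradicting the positivity of the density of U
   near u = 0. *)

lemma sph_0 [simp]: "sph d u 0 = cos (2 * pi * u 0)"
  by (simp add: sph_def)

lemma prod_sin_squares_telescope:
  fixes s :: "nat \<Rightarrow> real"
  shows "(\<Sum>j<m. (\<Prod>l\<in>{1..j}. (sin (s l))\<^sup>2) * (cos (s (Suc j)))\<^sup>2)
          + (\<Prod>l\<in>{1..m}. (sin (s l))\<^sup>2) = 1"
proof (induction m)
  case (Suc m)
  have "(\<Prod>l\<in>{1..m}. (sin (s l))\<^sup>2) * (cos (s (Suc m)))\<^sup>2 + (\<Prod>l\<in>{1..Suc m}. (sin (s l))\<^sup>2)
      = (\<Prod>l\<in>{1..m}. (sin (s l))\<^sup>2)"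
    by (simp add: prod.nat_ivl_Suc' flip: distrib_left)
  with Suc.IH show ?case by simp
qed simp

lemma sum_sph_squares:
  assumes "2 \<le> d"
  shows "(\<Sum>k<d. (sph d u k)\<^sup>2) = 1"
proof -
  obtain m where d: "d = Suc (Suc m)" using assms by (metis add_2_eq_Suc le_Suc_ex)
  define s where "s l = pi * u l" for l
  have "(\<Sum>k<d. (sph d u k)\<^sup>2) = (sph d u 0)\<^sup>2 + (\<Sum>j<m. (sph d u (Suc j))\<^sup>2) + (sph d u (Suc m))\<^sup>2"
    unfolding d sum.lessThan_Suc_shift[of _ "Suc m"] sum.lessThan_Suc[of _ m] by simp
  also have "\<dots> = (cos (2 * pi * u 0))\<^sup>2 + (sin (2 * pi * u 0))\<^sup>2 *
      ((\<Sum>j<m. (\<Prod>l\<in>{1..j}. (sin (s l))\<^sup>2) * (cos (s (Suc j)))\<^sup>2) + (\<Prod>l\<in>{1..m}. (sin (s l))\<^sup>2))"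
    by (simp add: d sph_def s_def distrib_left sum_distrib_left power_mult_distrib prod_power_distrib
        atLeastLessThanSuc_atLeastAtMost mult.assoc)
  also have "\<dots> = 1"
    by (simp only: prod_sin_squares_telescope mult_1_right sin_cos_squared_add2)
  finally show ?thesis .
qed

lemma sum_sph_squares_tail:
  assumes "2 \<le> d"
  shows "(\<Sum>k<d-1. (sph d u (Suc k))\<^sup>2) = (sin (2 * pi * u 0))\<^sup>2"
proof -
  obtain n where d: "d = Suc n"
    using assms by (cases d) auto
  have "(\<Sum>k<Suc n. (sph d u k)\<^sup>2) = 1"
    using sum_sph_squares[OF assms] d by simp
  then have "(cos (2 * pi * u 0))\<^sup>2 + (\<Sum>k<n. (sph d u (Suc k))\<^sup>2) = 1"
    by (simp only: sum.lessThan_Suc_shift sph_0)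
  then show ?thesis
    using d by (simp add: sin_squared_eq)
qed

lemma abs_sph_le_abs_sin:
  assumes "0 < k"
  shows "\<bar>sph d u k\<bar> \<le> \<bar>sin (2 * pi * u 0)\<bar>"
proof -
  have "\<bar>\<Prod>l\<in>L. sin (pi * u l)\<bar> \<le> 1" for L
    unfolding abs_prod by (rule prod_le_1) auto
  then have "\<bar>sin (2 * pi * u 0) * (\<Prod>l\<in>L. sin (pi * u l)) * c\<bar> \<le> \<bar>sin (2 * pi * u 0)\<bar>"
    if "\<bar>c\<bar> \<le> 1" for L c
    using that unfolding abs_mult by (metis abs_ge_zero mult.assoc mult_le_one mult_left_le)
  from this[of "cos (pi * u k)"] this[of 1] show ?thesis
    using assms by (auto simp: sph_def)
qed

lemma abs_sph_le_one: "\<bar>sph d u k\<bar> \<le> 1"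
  by (cases "k = 0") (auto intro: order_trans[OF abs_sph_le_abs_sin abs_sin_le_one])

lemma measurable_component_PiM:
  "(\<lambda>u. u l) \<in> borel_measurable (PiM I (\<lambda>_. lborel))"
proof (cases "l \<in> I")
  case True
  then show ?thesis by measurable
next
  case False
  then show ?thesis
    by (subst measurable_cong[where g = "\<lambda>_. undefined"]) (auto simp: space_PiM PiE_def extensional_def)
qed

lemma measurable_sph [measurable]:
  "(\<lambda>u. sph d u k) \<in> borel_measurable (PiM I (\<lambda>_. lborel))"
  using measurable_component_PiM[measurable] unfolding sph_def by measurable

lemma Re_exp_i_mult: "Re (exp (\<i> * z * complex_of_real y)) = exp (- Im z * y) * cos (Re z * y)"
  by (simp add: Re_exp)

lemma sgn_cos_abs_mult:
  fixes a y :: real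
  shows "sgn (cos (a * \<bar>y\<bar>)) * cos (a * y) = \<bar>cos (a * y)\<bar>"
proof -
  have "cos (a * \<bar>y\<bar>) = cos (a * y)"
    by (cases "0 \<le> y") simp_all
  then show ?thesis
    by (metis abs_sgn mult.commute)
qed

lemma norm_exp_i_times_le: "cmod (exp (\<i> * \<zeta>)) \<le> exp (cmod \<zeta>)"
  using abs_Im_le_cmod[of \<zeta>] by simp

lemma Re_exp_i_times_pos:
  assumes "cmod \<zeta> < pi / 2"
  shows "0 < Re (exp (\<i> * \<zeta>))"
proof -
  have "\<bar>Re \<zeta>\<bar> < pi / 2"
    using abs_Re_le_cmod[of \<zeta>] assms by linarith
  then have "0 < cos (Re \<zeta>)"
    by (intro cos_gt_zero_pi) auto
  then show ?thesis
    by (simp add: Re_exp)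
qed

lemma norm_sum_mult_of_real_le:
  fixes z :: "nat \<Rightarrow> complex" and x b :: "nat \<Rightarrow> real"
  assumes "\<And>k. k < n \<Longrightarrow> \<bar>x k\<bar> \<le> b k"
  shows "cmod (\<Sum>k<n. z k * complex_of_real (x k)) \<le> (\<Sum>k<n. cmod (z k) * b k)"
  using assms by (intro order_trans[OF norm_sum sum_mono]) (auto simp: norm_mult intro: mult_left_mono)

lemma Re_exp_sum_sph_pos:
  fixes z :: "nat \<Rightarrow> complex"
  assumes "\<bar>sin (2 * pi * u 0)\<bar> \<le> \<delta>" "\<bar>R\<bar> * (\<Sum>k<n. cmod (z k)) * \<delta> < pi / 2"
  shows "0 < Re (exp (\<i> * (\<Sum>k<n. z k * complex_of_real (R * sph d u (Suc k)))))"
proof (rule Re_exp_i_times_pos)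
  have "cmod (\<Sum>k<n. z k * complex_of_real (R * sph d u (Suc k))) \<le> (\<Sum>k<n. cmod (z k) * (\<bar>R\<bar> * \<delta>))"
  proof (rule norm_sum_mult_of_real_le)
    fix k
    have "\<bar>sph d u (Suc k)\<bar> \<le> \<delta>"
      using abs_sph_le_abs_sin[of "Suc k" d u] assms(1) by simp
    then show "\<bar>R * sph d u (Suc k)\<bar> \<le> \<bar>R\<bar> * \<delta>"
      by (simp add: abs_mult mult_left_mono)
  qed
  also have "\<dots> = \<bar>R\<bar> * (\<Sum>k<n. cmod (z k)) * \<delta>"
    by (simp add: sum_distrib_left sum_distrib_right mult_ac)
  finally show "cmod (\<Sum>k<n. z k * complex_of_real (R * sph d u (Suc k))) < pi / 2"
    using assms(2) by linarith
qed

lemma countable_cos_2pi_eq: "countable {t::real. cos (2 * pi * t) = c}"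
proof (cases "\<exists>y. cos y = c")
  case True
  then obtain y where y: "cos y = c" by auto
  let ?S = "(\<lambda>n. (y + 2 * n * pi) / (2 * pi)) ` \<int> \<union> (\<lambda>n. (- y + 2 * n * pi) / (2 * pi)) ` \<int>"
  have "{t. cos (2 * pi * t) = c} \<subseteq> ?S"
  proof
    fix t assume "t \<in> {t. cos (2 * pi * t) = c}"
    then obtain n where "n \<in> \<int>" "2 * pi * t = y + 2 * n * pi \<or> 2 * pi * t = - y + 2 * n * pi"
      using y cos_eq[of "2 * pi * t" y] by auto
    then show "t \<in> ?S"
      by (auto simp: field_simps)
  qed
  then show ?thesis
    by (meson countable_Un countable_image countable_int countable_subset)
qed auto

lemma countable_sin_2pi_eq: "countable {t::real. sin (2 * pi * t) = c}"
proof -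
  have "sin (2 * pi * t) = cos (2 * pi * (1 / 4 - t))" for t
    unfolding sin_cos_eq by (simp add: algebra_simps)
  then have "{t. sin (2 * pi * t) = c} \<subseteq> (\<lambda>s. 1 / 4 - s) ` {s. cos (2 * pi * s) = c}"
    by (intro subsetI image_eqI[where x = "1 / 4 - _"]) auto
  then show ?thesis
    by (rule countable_subset) (intro countable_image countable_cos_2pi_eq)
qed

lemma countable_cos_mult_zeros:
  fixes \<phi> :: "'a \<Rightarrow> real" and \<alpha> :: real
  assumes "\<And>c. countable {t. \<phi> t = c}"
  shows "countable {t. cos (\<alpha> * \<phi> t) = 0}"
proof (cases "\<alpha> = 0")
  case False
  then have "{t. cos (\<alpha> * \<phi> t) = 0} \<subseteq> (\<Union>i::int. {t. \<phi> t = of_int i * (pi / 2) / \<alpha>})"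
    by (auto simp: cos_zero_iff_int field_simps)
  moreover have "countable (\<Union>i::int. {t. \<phi> t = of_int i * (pi / 2) / \<alpha>})"
    using assms by (intro countable_UN) auto
  ultimately show ?thesis
    by (rule countable_subset)
qed simp

lemma distributed_AE:
  assumes "distributed M N X f" "AE x in N. P x"
  shows "AE \<omega> in M. P (X \<omega>)"
proof (rule AE_distrD[OF distributed_measurable[OF assms(1)]])
  have "AE x in density N f. P x"
    using assms(2) by (subst AE_density[OF distributed_borel_measurable[OF assms(1)]]) (auto elim: eventually_mono)
  then show "AE x in distr M N X. P x"
    unfolding distributed_distr_eq_density[OF assms(1)] .
qed

lemma distributed_null_if_AE_notin:
  assumes dist: "distributed M N X f" and B: "B \<in> sets N" "\<And>x. x \<in> B \<Longrightarrow> 0 < f x"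
    and "AE \<omega> in M. X \<omega> \<notin> B"
  shows "emeasure N B = 0"
proof -
  have "AE x in distr M N X. x \<notin> B"
    using assms(4) by (subst AE_distr_iff[OF distributed_measurable[OF dist]]) (use B(1) in auto)
  then have "AE x in N. 0 < f x \<longrightarrow> x \<notin> B"
    unfolding distributed_distr_eq_density[OF dist] AE_density[OF distributed_borel_measurable[OF dist]] .
  then have "AE x in N. x \<notin> B"
    by eventually_elim (use B(2) in auto)
  then show ?thesis
    by (subst (asm) AE_iff_measurable[OF B(1)]) (use sets.sets_into_space[OF B(1)] in auto)
qed

lemma (in product_sigma_finite) AE_PiM_component_notin_null:
  assumes "finite I" "i \<in> I" "Z \<in> null_sets (M i)"
  shows "AE x in PiM I M. x i \<notin> Z"
proof (rule AE_I')
  define A where "A j = (if j = i then Z else space (M j))" for j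
  have A: "A j \<in> sets (M j)" for j
    using assms(3) by (auto simp: A_def)
  have "emeasure (PiM I M) (PiE I A) = (\<Prod>j\<in>I. emeasure (M j) (A j))"
    using assms(1) A by (intro emeasure_PiM) auto
  also have "\<dots> = 0"
    using assms by (intro prod_zero bexI[of _ i]) (auto simp: A_def)
  finally show "PiE I A \<in> null_sets (PiM I M)"
    using assms(1) A by (auto intro: sets_PiM_I_finite)
  show "{x \<in> space (PiM I M). \<not> x i \<notin> Z} \<subseteq> PiE I A"
    by (auto simp: space_PiM A_def)
qed

lemma not_AE_cos_mult_zero:
  fixes \<phi> :: "real \<Rightarrow> real" and \<alpha> :: real
  assumes "prob_space M" "distributed M (PiM I (\<lambda>_. lborel)) U f" "finite I" "i \<in> I"
    and "\<And>c. countable {t. \<phi> t = c}"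
  shows "\<not> (AE \<omega> in M. cos (\<alpha> * \<phi> (U \<omega> i)) = 0)"
proof
  interpret product_sigma_finite "\<lambda>_. lborel :: real measure"
    by standard
  have "AE u in PiM I (\<lambda>_. lborel). u i \<notin> {t. cos (\<alpha> * \<phi> t) = 0}"
    using assms(3,4) countable_imp_null_set_lborel[OF countable_cos_mult_zeros[OF assms(5)]]
    by (rule AE_PiM_component_notin_null)
  then have "AE \<omega> in M. U \<omega> i \<notin> {t. cos (\<alpha> * \<phi> t) = 0}"
    by (rule distributed_AE[OF assms(2)])
  moreover assume "AE \<omega> in M. cos (\<alpha> * \<phi> (U \<omega> i)) = 0"
  ultimately have "AE \<omega> in M. False"
    by eventually_elim simp
  with assms(1) show False
    by (simp add: prob_space.AE_False)
qed

lemma not_AE_component_notin_interval: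
  fixes U :: "'a \<Rightarrow> 'i \<Rightarrow> real"
  assumes "prob_space M" "distributed M (PiM I (\<lambda>_. lborel)) U f" "finite I" "i \<in> I"
    and "0 < \<gamma>" "\<And>u. u \<in> PiE I (\<lambda>_. {0<..<\<gamma>}) \<Longrightarrow> 0 < f u" and "0 < \<epsilon>"
  shows "\<not> (AE \<omega> in M. U \<omega> i \<notin> {0<..<\<epsilon>})"
proof
  interpret product_sigma_finite "\<lambda>_. lborel :: real measure"
    by standard
  define m where "m = min \<gamma> \<epsilon>"
  have "0 < m"
    using assms(5,7) by (simp add: m_def)
  define B where "B = PiE I (\<lambda>_. {0<..<m})"
  assume "AE \<omega> in M. U \<omega> i \<notin> {0<..<\<epsilon>}"
  moreover have "U \<omega> \<notin> B" if "U \<omega> i \<notin> {0<..<\<epsilon>}" for \<omega>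
  proof
    assume "U \<omega> \<in> B"
    then have "U \<omega> i \<in> {0<..<m}"
      unfolding B_def using assms(4) by (rule PiE_mem)
    with that show False
      by (simp add: m_def)
  qed
  ultimately have "AE \<omega> in M. U \<omega> \<notin> B"
    by (auto elim: eventually_mono)
  then have "emeasure (PiM I (\<lambda>_. lborel)) B = 0"
  proof (rule distributed_null_if_AE_notin[OF assms(2), rotated 2])
    show "B \<in> sets (PiM I (\<lambda>_. lborel))"
      unfolding B_def using assms(3) by (intro sets_PiM_I_finite) auto
    show "0 < f u" if "u \<in> B" for u
      using that by (intro assms(6)) (auto simp: B_def m_def)
  qed
  moreover have "emeasure (PiM I (\<lambda>_. lborel)) B = ennreal m ^ card I"
    using assms(3) \<open>0 < m\<close> by (simp add: B_def emeasure_PiM)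
  ultimately show False
    using \<open>0 < m\<close> by simp
qed

lemma finite_measure_subalgebra_vimage_algebra:
  assumes "finite_measure M" "X \<in> measurable M N"
  shows "finite_measure_subalgebra M (vimage_algebra (space M) X N)"
  using assms sets_image_in_sets[OF refl assms(2)]
  by (simp add: finite_measure_subalgebra_def finite_measure_subalgebra_axioms_def subalgebra_def)

lemma measurable_vimage_algebra_comp:
  assumes "X \<in> measurable M N" "h \<in> measurable N K"
  shows "(\<lambda>x. h (X x)) \<in> measurable (vimage_algebra (space M) X N) K"
proof -
  have "X \<in> space M \<rightarrow> space N"
    using assms(1) by (auto dest: measurable_space)
  then show ?thesis
    using measurable_comp[OF measurable_vimage_algebra1 assms(2)] by (simp add: comp_def)
qed

lemma (in sigma_finite_subalgebra) real_cond_exp_Re_mult: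
  assumes "integrable M (\<lambda>x. Re (g x))" "integrable M (\<lambda>x. Im (g x))"
  shows "AE x in M. real_cond_exp M F (\<lambda>x. Re (w * g x)) x = Re (w * cplx_cond_exp M F g x)"
proof -
  have "AE x in M. real_cond_exp M F (\<lambda>x. Re w * Re (g x) - Im w * Im (g x)) x
      = real_cond_exp M F (\<lambda>x. Re w * Re (g x)) x - real_cond_exp M F (\<lambda>x. Im w * Im (g x)) x"
    using assms by (intro real_cond_exp_diff) auto
  moreover have "AE x in M. real_cond_exp M F (\<lambda>x. Re w * Re (g x)) x
      = Re w * real_cond_exp M F (\<lambda>x. Re (g x)) x"
    using assms(1) by (rule real_cond_exp_cmult)
  moreover have "AE x in M. real_cond_exp M F (\<lambda>x. Im w * Im (g x)) x
      = Im w * real_cond_exp M F (\<lambda>x. Im (g x)) x"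
    using assms(2) by (rule real_cond_exp_cmult)
  ultimately show ?thesis
    by eventually_elim (simp add: cplx_cond_exp_def)
qed

lemma (in sigma_finite_subalgebra) AE_mult_zero_if_real_cond_exp_zero:
  assumes "integrable M (\<lambda>x. h x * q x)" "h \<in> borel_measurable F" "q \<in> borel_measurable M"
    and "AE x in M. real_cond_exp M F q x = 0" and "AE x in M. 0 \<le> h x * q x"
  shows "AE x in M. h x * q x = 0"
proof -
  have "(\<integral>x. h x * q x \<partial>M) = (\<integral>x. h x * real_cond_exp M F q x \<partial>M)"
    using real_cond_exp_intg(2)[OF assms(1-3)] by simp
  also have "\<dots> = 0"
    using assms(4) by (auto intro!: integral_eq_zero_AE elim!: eventually_mono)
  finally show ?thesis
    using integral_nonneg_eq_0_iff_AE[OF assms(1,5)] by simp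
qed

lemma (in finite_measure_subalgebra) AE_mult_Re_zero_if_cplx_cond_exp_zero:
  fixes g :: "'a \<Rightarrow> complex" and h :: "'a \<Rightarrow> real"
  assumes g: "g \<in> borel_measurable M" "\<And>x. x \<in> space M \<Longrightarrow> cmod (g x) \<le> B"
    and h: "h \<in> borel_measurable F" "\<And>x. x \<in> space M \<Longrightarrow> \<bar>h x\<bar> \<le> K"
    and cond_exp: "AE x in M. cplx_cond_exp M F g x = 0"
    and nonneg: "\<And>x. x \<in> space M \<Longrightarrow> 0 \<le> h x * Re (w * g x)"
  shows "AE x in M. h x * Re (w * g x) = 0"
proof (rule AE_mult_zero_if_real_cond_exp_zero)
  have g_int: "integrable M g"
    using g by (intro integrable_const_bound[where B = B]) auto
  have "h \<in> borel_measurable M"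
    using h(1) by (rule measurable_from_subalg[OF subalg])
  moreover have "\<bar>h x * Re (w * g x)\<bar> \<le> K * (cmod w * B)" if "x \<in> space M" for x
    unfolding abs_mult
  proof (rule mult_mono)
    show "\<bar>Re (w * g x)\<bar> \<le> cmod w * B"
      using abs_Re_le_cmod[of "w * g x"] g(2)[OF that]
      by (metis norm_ge_zero norm_mult mult_left_mono order_trans)
  qed (use h(2)[OF that] in auto)
  ultimately show "integrable M (\<lambda>x. h x * Re (w * g x))"
    using g by (intro integrable_const_bound[where B = "K * (cmod w * B)"]) auto
  have "AE x in M. real_cond_exp M F (\<lambda>x. Re (w * g x)) x = Re (w * cplx_cond_exp M F g x)"
    using g_int by (intro real_cond_exp_Re_mult) auto
  then show "AE x in M. real_cond_exp M F (\<lambda>x. Re (w * g x)) x = 0"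
    using cond_exp by eventually_elim simp
qed (use g h nonneg in auto)

lemma (in finite_measure_subalgebra) AE_not_if_cplx_cond_exp_zero:
  fixes g :: "'a \<Rightarrow> complex"
  assumes g: "g \<in> borel_measurable M" "\<And>x. x \<in> space M \<Longrightarrow> cmod (g x) \<le> B"
    and cond_exp: "AE x in M. cplx_cond_exp M F g x = 0"
    and P: "Measurable.pred F P" "\<And>x. x \<in> space M \<Longrightarrow> P x \<Longrightarrow> 0 < Re (w * g x)"
  shows "AE x in M. \<not> P x"
proof -
  have [measurable]: "Measurable.pred F P"
    by (rule P(1))
  have "AE x in M. (if P x then 1 else 0) * Re (w * g x) = 0"
  proof (rule AE_mult_Re_zero_if_cplx_cond_exp_zero[OF g _ _ cond_exp])
    show "(\<lambda>x. if P x then 1 else 0) \<in> borel_measurable F"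
      by measurable
    show "\<bar>if P x then 1 else 0\<bar> \<le> (1::real)" for x
      by simp
    show "0 \<le> (if P x then 1 else 0) * Re (w * g x)" if "x \<in> space M" for x
      using less_imp_le[OF P(2)[OF that]] by simp
  qed
  then show ?thesis
    using AE_space by eventually_elim (use P(2) in force)
qed

lemma AE_cos_zero_if_cond_exp_exp_zero:
  fixes Y :: "'a \<Rightarrow> real" and z :: complex
  assumes "finite_measure M" and X: "X \<in> measurable M N"
    and Y: "Y \<in> borel_measurable M" "\<And>\<omega>. \<omega> \<in> space M \<Longrightarrow> \<bar>Y \<omega>\<bar> \<le> K"
    and q: "q \<in> borel_measurable N" "\<And>\<omega>. \<omega> \<in> space M \<Longrightarrow> \<bar>Y \<omega>\<bar> = q (X \<omega>)"
    and cond_exp: "AE \<omega> in M. cplx_cond_exp M (vimage_algebra (space M) X N)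
                      (\<lambda>\<omega>. exp (\<i> * z * complex_of_real (c + Y \<omega>))) \<omega> = 0"
  shows "AE \<omega> in M. cos (Re z * Y \<omega>) = 0"
proof -
  interpret finite_measure_subalgebra M "vimage_algebra (space M) X N"
    using assms(1) X by (rule finite_measure_subalgebra_vimage_algebra)
  define g where "g = (\<lambda>\<omega>. exp (\<i> * z * complex_of_real (c + Y \<omega>)))"
  define w where "w = exp (- \<i> * z * complex_of_real c)"
  define h where "h \<omega> = sgn (cos (Re z * q (X \<omega>)))" for \<omega>
  have hwg: "h \<omega> * Re (w * g \<omega>) = exp (- Im z * Y \<omega>) * \<bar>cos (Re z * Y \<omega>)\<bar>"
    if "\<omega> \<in> space M" for \<omega>
  proof -
    have "w * g \<omega> = exp (\<i> * z * complex_of_real (Y \<omega>))"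
      by (simp add: w_def g_def flip: exp_add) (simp add: algebra_simps)
    then show ?thesis
      using sgn_cos_abs_mult[of "Re z" "Y \<omega>"]
      by (simp add: h_def q(2)[OF that, symmetric] Re_exp_i_mult mult.left_commute)
  qed
  have "AE \<omega> in M. h \<omega> * Re (w * g \<omega>) = 0"
  proof (rule AE_mult_Re_zero_if_cplx_cond_exp_zero)
    show "g \<in> borel_measurable M"
      using Y(1) unfolding g_def by measurable
    show "cmod (g \<omega>) \<le> exp (\<bar>Im z\<bar> * (\<bar>c\<bar> + K))" if "\<omega> \<in> space M" for \<omega>
    proof -
      have "- Im z * (c + Y \<omega>) \<le> \<bar>Im z\<bar> * \<bar>c + Y \<omega>\<bar>"
        by (metis abs_ge_self abs_minus_cancel abs_mult minus_mult_left)
      also have "\<dots> \<le> \<bar>Im z\<bar> * (\<bar>c\<bar> + K)"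
        using Y(2)[OF that] by (intro mult_left_mono) (auto intro: order_trans[OF abs_triangle_ineq])
      finally show ?thesis
        by (simp add: g_def)
    qed
    show "h \<in> borel_measurable (vimage_algebra (space M) X N)"
      unfolding h_def using q(1) by (intro measurable_vimage_algebra_comp[OF X]) simp
    show "\<bar>h \<omega>\<bar> \<le> 1" for \<omega>
      by (simp add: h_def abs_sgn_eq)
    show "AE \<omega> in M. cplx_cond_exp M (vimage_algebra (space M) X N) g \<omega> = 0"
      using cond_exp unfolding g_def .
    show "0 \<le> h \<omega> * Re (w * g \<omega>)" if "\<omega> \<in> space M" for \<omega>
      unfolding hwg[OF that] by simp
  qed
  then show ?thesis
    using AE_space by eventually_elim (subst (asm) hwg; simp)
qed

lemma not_AE_cond_exp_first_coord_zero:
  fixes U :: "'a \<Rightarrow> nat \<Rightarrow> real" and z :: complex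
  assumes "prob_space M" "2 \<le> d" and dist: "distributed M (PiM {..<d-1} (\<lambda>_. lborel)) U f"
  shows "\<not> (AE \<omega> in M. cplx_cond_exp M
            (vimage_algebra (space M) (\<lambda>\<omega>. \<lambda>k\<in>{..<d-1}. C (Suc k) + R * sph d (U \<omega>) (Suc k))
              (PiM {..<d-1} (\<lambda>_. borel)))
            (\<lambda>\<omega>. exp (\<i> * z * complex_of_real (C 0 + R * sph d (U \<omega>) 0))) \<omega> = 0)"
    (is "\<not> (AE \<omega> in M. cplx_cond_exp M (vimage_algebra _ ?X2 ?N) _ \<omega> = 0)")
proof
  interpret prob_space M by fact
  have [measurable]: "(\<lambda>\<omega>. sph d (U \<omega>) k) \<in> borel_measurable M" for k
    by (rule measurable_compose[OF distributed_measurable[OF dist] measurable_sph])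
  \<comment> \<open>recovers \<open>\<bar>R * cos (2 * pi * u 0)\<bar>\<close> from the other coordinates via the sphere equation\<close>
  define q where "q v = sqrt (R\<^sup>2 - (\<Sum>k<d-1. (v k - C (Suc k))\<^sup>2))" for v :: "nat \<Rightarrow> real"
  assume "AE \<omega> in M. cplx_cond_exp M (vimage_algebra (space M) ?X2 ?N)
            (\<lambda>\<omega>. exp (\<i> * z * complex_of_real (C 0 + R * sph d (U \<omega>) 0))) \<omega> = 0"
  then have "AE \<omega> in M. cos (Re z * (R * sph d (U \<omega>) 0)) = 0"
  proof (rule AE_cos_zero_if_cond_exp_exp_zero[where K = "\<bar>R\<bar>" and q = q, rotated -1])
    show "?X2 \<in> measurable M ?N"
      by (intro measurable_restrict) measurable
    show "(\<lambda>\<omega>. R * sph d (U \<omega>) 0) \<in> borel_measurable M"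
      by measurable
    show "q \<in> borel_measurable ?N"
      unfolding q_def by measurable
    show "\<bar>R * sph d (U \<omega>) 0\<bar> \<le> \<bar>R\<bar>" for \<omega>
      by (simp add: abs_mult mult_left_le)
    show "\<bar>R * sph d (U \<omega>) 0\<bar> = q (?X2 \<omega>)" for \<omega>
    proof -
      have "(\<Sum>k<d-1. (?X2 \<omega> k - C (Suc k))\<^sup>2) = R\<^sup>2 * (sin (2 * pi * U \<omega> 0))\<^sup>2"
        using sum_sph_squares_tail[OF assms(2), of "U \<omega>"]
        by (simp add: power_mult_distrib flip: sum_distrib_left)
      then show ?thesis
        by (simp add: q_def cos_squared_eq algebra_simps flip: real_sqrt_abs)
    qed
  qed (rule finite_measure_axioms)
  then have "AE \<omega> in M. cos ((Re z * R) * cos (2 * pi * U \<omega> 0)) = 0"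
    by (simp add: mult.assoc)
  moreover have "0 \<in> {..<d-1}"
    using assms(2) by simp
  from not_AE_cos_mult_zero[OF assms(1) dist finite_lessThan this, where \<phi> = "\<lambda>t. cos (2 * pi * t)"]
  have "\<not> (AE \<omega> in M. cos ((Re z * R) * cos (2 * pi * U \<omega> 0)) = 0)"
    using countable_cos_2pi_eq by blast
  ultimately show False
    by contradiction
qed

lemma not_AE_cond_exp_second_coord_zero_circle:
  fixes U :: "'a \<Rightarrow> nat \<Rightarrow> real" and z :: complex
  assumes "prob_space M" and dist: "distributed M (PiM {..<1} (\<lambda>_. lborel)) U f"
  shows "\<not> (AE \<omega> in M. cplx_cond_exp M (vimage_algebra (space M) (\<lambda>\<omega>. C 0 + R * sph 2 (U \<omega>) 0) borel)
            (\<lambda>\<omega>. exp (\<i> * z * complex_of_real (C 1 + R * sph 2 (U \<omega>) 1))) \<omega> = 0)"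
    (is "\<not> (AE \<omega> in M. cplx_cond_exp M (vimage_algebra _ ?X1 _) _ \<omega> = 0)")
proof
  interpret prob_space M by fact
  have [measurable]: "(\<lambda>\<omega>. sph 2 (U \<omega>) k) \<in> borel_measurable M" for k
    by (rule measurable_compose[OF distributed_measurable[OF dist] measurable_sph])
  have sph_2_1: "sph 2 u 1 = sin (2 * pi * u 0)" for u
    by (simp add: sph_def)
  define q where "q x = sqrt (R\<^sup>2 - (x - C 0)\<^sup>2)" for x
  assume "AE \<omega> in M. cplx_cond_exp M (vimage_algebra (space M) ?X1 borel)
            (\<lambda>\<omega>. exp (\<i> * z * complex_of_real (C 1 + R * sph 2 (U \<omega>) 1))) \<omega> = 0"
  then have "AE \<omega> in M. cos (Re z * (R * sph 2 (U \<omega>) 1)) = 0"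
  proof (rule AE_cos_zero_if_cond_exp_exp_zero[where K = "\<bar>R\<bar>" and q = q, rotated -1])
    show "?X1 \<in> borel_measurable M" "(\<lambda>\<omega>. R * sph 2 (U \<omega>) 1) \<in> borel_measurable M"
      by measurable
    show "q \<in> borel_measurable borel"
      unfolding q_def by measurable
    show "\<bar>R * sph 2 (U \<omega>) 1\<bar> \<le> \<bar>R\<bar>" for \<omega>
      using sph_2_1[of "U \<omega>"] by (simp add: abs_mult mult_left_le)
    show "\<bar>R * sph 2 (U \<omega>) 1\<bar> = q (?X1 \<omega>)" for \<omega>
      using sph_2_1[of "U \<omega>"] by (simp add: q_def sin_squared_eq algebra_simps flip: real_sqrt_abs)
  qed (rule finite_measure_axioms)
  then have "AE \<omega> in M. cos ((Re z * R) * sin (2 * pi * U \<omega> 0)) = 0"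
    using sph_2_1 by (simp add: mult.assoc)
  moreover have "0 \<in> {..<1::nat}"
    by simp
  from not_AE_cos_mult_zero[OF assms(1) dist finite_lessThan this, where \<phi> = "\<lambda>t. sin (2 * pi * t)"]
  have "\<not> (AE \<omega> in M. cos ((Re z * R) * sin (2 * pi * U \<omega> 0)) = 0)"
    using countable_sin_2pi_eq by blast
  ultimately show False
    by contradiction
qed

lemma AE_sin_ge_if_cond_exp_zero:
  fixes U :: "'a \<Rightarrow> nat \<Rightarrow> real" and z :: "nat \<Rightarrow> complex"
  assumes "prob_space M" "0 < R" and dist: "distributed M (PiM {..<d-1} (\<lambda>_. lborel)) U f"
    and small: "R * (\<Sum>k<d-1. cmod (z k)) * \<delta> < pi / 2"
    and cond_exp: "AE \<omega> in M. cplx_cond_exp M (vimage_algebra (space M) (\<lambda>\<omega>. C 0 + R * sph d (U \<omega>) 0) borel)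
      (\<lambda>\<omega>. exp (\<i> * (\<Sum>k<d-1. z k * complex_of_real (C (Suc k) + R * sph d (U \<omega>) (Suc k))))) \<omega> = 0"
  shows "AE \<omega> in M. \<delta> \<le> \<bar>sin (2 * pi * U \<omega> 0)\<bar>"
proof -
  interpret prob_space M by fact
  have [measurable]: "(\<lambda>\<omega>. sph d (U \<omega>) k) \<in> borel_measurable M" for k
    by (rule measurable_compose[OF distributed_measurable[OF dist] measurable_sph])
  let ?X1 = "\<lambda>\<omega>. C 0 + R * sph d (U \<omega>) 0"
  define g where "g = (\<lambda>\<omega>. exp (\<i> * (\<Sum>k<d-1. z k * complex_of_real (C (Suc k) + R * sph d (U \<omega>) (Suc k)))))"
  define w where "w = exp (- \<i> * (\<Sum>k<d-1. z k * complex_of_real (C (Suc k))))"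
  define A where "A = {x. sqrt (1 - ((x - C 0) / R)\<^sup>2) < \<delta>}"
  have X1_in_A: "?X1 \<omega> \<in> A \<longleftrightarrow> \<bar>sin (2 * pi * U \<omega> 0)\<bar> < \<delta>" for \<omega>
    using assms(2) by (simp add: A_def flip: sin_squared_eq real_sqrt_abs)
  have Re_pos: "0 < Re (w * g \<omega>)" if "\<bar>sin (2 * pi * U \<omega> 0)\<bar> < \<delta>" for \<omega>
  proof -
    have "w * g \<omega> = exp (\<i> * (\<Sum>k<d-1. z k * complex_of_real (R * sph d (U \<omega>) (Suc k))))"
      by (simp add: w_def g_def distrib_left sum.distrib flip: exp_add)
    then show ?thesis
      using Re_exp_sum_sph_pos[where u = "U \<omega>" and \<delta> = \<delta> and R = R and n = "d-1" and z = z and d = d]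
        that small assms(2)
      by (simp add: abs_of_pos)
  qed
  interpret finite_measure_subalgebra M "vimage_algebra (space M) ?X1 borel"
    by (intro finite_measure_subalgebra_vimage_algebra finite_measure_axioms) measurable
  have "AE \<omega> in M. \<not> ?X1 \<omega> \<in> A"
  proof (rule AE_not_if_cplx_cond_exp_zero)
    show "g \<in> borel_measurable M"
      unfolding g_def by measurable
    show "cmod (g \<omega>) \<le> exp (\<Sum>k<d-1. cmod (z k) * (\<bar>C (Suc k)\<bar> + R))" for \<omega>
      unfolding g_def
    proof (rule order_trans[OF norm_exp_i_times_le exp_mono[OF norm_sum_mult_of_real_le]])
      fix k
      have "\<bar>R * sph d (U \<omega>) (Suc k)\<bar> \<le> R"
        using abs_sph_le_one[of d "U \<omega>" "Suc k"] assms(2) by (simp add: abs_mult mult_left_le)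
      then show "\<bar>C (Suc k) + R * sph d (U \<omega>) (Suc k)\<bar> \<le> \<bar>C (Suc k)\<bar> + R"
        using abs_triangle_ineq[of "C (Suc k)" "R * sph d (U \<omega>) (Suc k)"] by linarith
    qed
    show "AE \<omega> in M. cplx_cond_exp M (vimage_algebra (space M) ?X1 borel) g \<omega> = 0"
      using cond_exp unfolding g_def .
    show "Measurable.pred (vimage_algebra (space M) ?X1 borel) (\<lambda>\<omega>. ?X1 \<omega> \<in> A)"
      unfolding A_def by (intro measurable_vimage_algebra_comp) measurable
    show "0 < Re (w * g \<omega>)" if "?X1 \<omega> \<in> A" for \<omega>
      using Re_pos X1_in_A that by blast
  qed
  then show ?thesis
    using X1_in_A by (auto simp: not_less elim: eventually_mono)
qed

lemma not_AE_cond_exp_other_coords_zero: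
  fixes U :: "'a \<Rightarrow> nat \<Rightarrow> real" and z :: "nat \<Rightarrow> complex"
  assumes "prob_space M" "2 \<le> d" "0 < R" and dist: "distributed M (PiM {..<d-1} (\<lambda>_. lborel)) U f"
    and "0 < \<gamma>" "\<And>u. u \<in> PiE {..<d-1} (\<lambda>_. {0<..<\<gamma>}) \<Longrightarrow> 0 < f u"
  shows "\<not> (AE \<omega> in M. cplx_cond_exp M (vimage_algebra (space M) (\<lambda>\<omega>. C 0 + R * sph d (U \<omega>) 0) borel)
      (\<lambda>\<omega>. exp (\<i> * (\<Sum>k<d-1. z k * complex_of_real (C (Suc k) + R * sph d (U \<omega>) (Suc k))))) \<omega> = 0)"
proof
  define \<delta> where "\<delta> = 1 / (R * (\<Sum>k<d-1. cmod (z k)) + 1)"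
  have Rz: "0 \<le> R * (\<Sum>k<d-1. cmod (z k))"
    using assms(3) by (simp add: sum_nonneg)
  then have "0 < \<delta>"
    by (simp add: \<delta>_def)
  have "R * (\<Sum>k<d-1. cmod (z k)) * \<delta> < 1"
    using Rz by (simp add: \<delta>_def)
  then have "R * (\<Sum>k<d-1. cmod (z k)) * \<delta> < pi / 2"
    using pi_gt3 by linarith
  moreover assume "AE \<omega> in M. cplx_cond_exp M (vimage_algebra (space M) (\<lambda>\<omega>. C 0 + R * sph d (U \<omega>) 0) borel)
      (\<lambda>\<omega>. exp (\<i> * (\<Sum>k<d-1. z k * complex_of_real (C (Suc k) + R * sph d (U \<omega>) (Suc k))))) \<omega> = 0"
  ultimately have "AE \<omega> in M. \<delta> \<le> \<bar>sin (2 * pi * U \<omega> 0)\<bar>"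
    by (rule AE_sin_ge_if_cond_exp_zero[OF assms(1,3) dist])
  then have "AE \<omega> in M. U \<omega> 0 \<notin> {0<..<\<delta> / (2 * pi)}"
  proof eventually_elim
    case (elim \<omega>)
    show ?case
    proof
      assume "U \<omega> 0 \<in> {0<..<\<delta> / (2 * pi)}"
      then have "\<bar>2 * pi * U \<omega> 0\<bar> < \<delta>"
        by (simp add: field_simps)
      with elim show False
        using abs_sin_x_le_abs_x[of "2 * pi * U \<omega> 0"] by linarith
    qed
  qed
  moreover have "0 \<in> {..<d-1}"
    using assms(2) by simp
  with \<open>0 < \<delta>\<close> have "\<not> (AE \<omega> in M. U \<omega> 0 \<notin> {0<..<\<delta> / (2 * pi)})"
    by (intro not_AE_component_notin_interval[OF assms(1) dist finite_lessThan _ assms(5,6)]) simp_all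
  ultimately show False
    by contradiction
qed

theorem lemma2p4:
  fixes M :: "'a measure" and d :: nat
    and U :: "'a \<Rightarrow> (nat \<Rightarrow> real)" and f :: "(nat \<Rightarrow> real) \<Rightarrow> ennreal"
    and C :: "nat \<Rightarrow> real" and R :: real
    and X1 :: "'a \<Rightarrow> real" and X2 :: "'a \<Rightarrow> (nat \<Rightarrow> real)"
  assumes "prob_space M"
    and "d \<ge> 2"
    and "R > 0"
    and U_cube: "\<forall>\<omega>\<in>space M. U \<omega> \<in> PiE {..<d-1} (\<lambda>_. {0..1})"
    and U_dens: "distributed M (PiM {..<d-1} (\<lambda>_. lborel)) U f"
    and f_pos: "d > 2 \<longrightarrow> (\<exists>\<gamma>>0. \<forall>u\<in>PiE {..<d-1} (\<lambda>_. {0<..<\<gamma>}). f u > 0)"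
    and X1_def: "X1 = (\<lambda>\<omega>. C 0 + R * sph d (U \<omega>) 0)"
    and X2_def: "X2 = (\<lambda>\<omega>. \<lambda>k\<in>{..<d-1}. C (Suc k) + R * sph d (U \<omega>) (Suc k))"
  shows "(\<forall>z::complex. \<not> (AE \<omega> in M.
            cplx_cond_exp M (vimage_algebra (space M) X2 (PiM {..<d-1} (\<lambda>_. borel)))
              (\<lambda>\<omega>'. exp (\<i> * z * complex_of_real (X1 \<omega>'))) \<omega> = 0))
       \<and> (\<forall>z::nat \<Rightarrow> complex. \<not> (AE \<omega> in M.
            cplx_cond_exp M (vimage_algebra (space M) X1 borel)
              (\<lambda>\<omega>'. exp (\<i> * (\<Sum>k<d-1. z k * complex_of_real (X2 \<omega>' k)))) \<omega> = 0))"
proof (intro conjI allI, goal_cases)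
  case (1 z)
  show ?case
    using not_AE_cond_exp_first_coord_zero[OF assms(1,2) U_dens] unfolding X1_def X2_def .
next
  case (2 z)
  have X2_sum: "(\<lambda>\<omega>'. exp (\<i> * (\<Sum>k<d-1. z k * complex_of_real (X2 \<omega>' k))))
      = (\<lambda>\<omega>'. exp (\<i> * (\<Sum>k<d-1. z k * complex_of_real (C (Suc k) + R * sph d (U \<omega>') (Suc k)))))"
    unfolding X2_def by simp
  show ?case
  proof (cases "d = 2")
    case True
    then have "distributed M (PiM {..<1} (\<lambda>_. lborel)) U f"
      using U_dens by simp
    from not_AE_cond_exp_second_coord_zero_circle[OF assms(1) this, of C R "z 0"]
    show ?thesis
      unfolding X2_sum X1_def using True by (simp add: mult.assoc)
  next
    case False
    with f_pos assms(2) obtain \<gamma> where "0 < \<gamma>" "\<forall>u\<in>PiE {..<d-1} (\<lambda>_. {0<..<\<gamma>}). 0 < f u"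
      by auto
    then show ?thesis
      unfolding X2_sum X1_def by (intro not_AE_cond_exp_other_coords_zero[OF assms(1,2,3) U_dens]) auto
  qed
qed

end
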